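(* Let $\Omega\subset\mathbb{R}^2$ be a bounded planar convex set with positive measure that can roll unimpeded inside a disc. Then there is a constant $C$ such that for all $\xi\in\mathbb{R}^2\setminus\{0\}$, \[ |\widehat{\chi_{\Omega}}(\xi)|\leqslant C|\xi|^{-3/2}. \]
   Context: $\widehat{\chi_{\Omega}}(\xi)=\int_{\mathbb{R}^2}\chi_{\Omega}(y)e^{-2\pi i\xi\cdot y}dy$ where $\chi_\Omega$ is the characteristic function of $\Omega$. A convex set $\Omega$ can roll unimpeded inside a (closed) disc $\Delta$ if for every point $x$ on the boundary $\partial\Delta$ there is a translated copy of $\Omega$ contained in $\Delta$ whose boundary touches $\partial\Delta$ at $x$. *)

theory Defs
  imports "HOL-Analysis.Analysis"
begin

definition fourier_char :: "(real^2) set \<Rightarrow> real^2 \<Rightarrow> complex" where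
  "fourier_char \<Omega> \<xi> = integral \<Omega> (\<lambda>y. exp (- (2 * pi * \<i> * complex_of_real (\<xi> \<bullet> y))))"

definition rolls_unimpeded_in :: "(real^2) set \<Rightarrow> real^2 \<Rightarrow> real \<Rightarrow> bool" where
  "rolls_unimpeded_in \<Omega> c R \<longleftrightarrow> 0 < R \<and>
     (\<forall>x \<in> sphere c R. \<exists>t. (\<lambda>y. t + y) ` \<Omega> \<subseteq> cball c R \<and> x \<in> frontier ((\<lambda>y. t + y) ` \<Omega>))"

end

theory Submission
  imports Defs
begin

text \<open>
  Write \<open>\<xi> = \<lambda> u\<close> with \<open>norm u = 1\<close> and slice the closure \<open>K\<close> of \<open>\<Omega>\<close> by the lines
  \<open>y \<bullet> u = s\<close>: the transform becomes \<open>\<integral> w s * exp (-2\<pi>i\<lambda>s) ds\<close>, where the chord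
  length \<open>w\<close> vanishes outside an interval \<open>[a, b]\<close> and is midpoint concave on it by the
  one-dimensional Brunn-Minkowski inequality. The translates of \<open>K\<close> in the disc of radius
  \<open>R\<close> that touch the circle at \<open>c + R u\<close> and \<open>c - R u\<close> confine the chords near \<open>b\<close> and
  \<open>a\<close> to caps of the disc, so \<open>w s \<le> 2 sqrt (2R) sqrt (b - s)\<close> and symmetrically at \<open>a\<close>.
  Shifting by half a period \<open>h = 1/(2\<lambda>)\<close> turns the integral into a quarter of the integral
  of the second difference \<open>2 w s - w (s - h) - w (s + h)\<close>. That difference has integral
  zero and is negative only within \<open>h\<close> of \<open>a\<close> and \<open>b\<close>, where the cap bound keeps it above
  \<open>-2 sqrt (2R) sqrt (2h)\<close>; hence the transform is \<open>O(h powr (3/2)) = O(\<lambda> powr (-3/2))\<close>.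
\<close>

definition fourier_wave :: "real \<Rightarrow> real \<Rightarrow> complex" where
  "fourier_wave lam s = exp (- (2 * pi * \<i> * complex_of_real (lam * s)))"

lemma fourier_wave_eq_cis: "fourier_wave lam s = cis (- (2 * pi * lam * s))"
  unfolding fourier_wave_def by (simp add: cis_conv_exp ac_simps)

lemma norm_fourier_wave [simp]: "norm (fourier_wave lam s) = 1"
  by (simp add: fourier_wave_eq_cis)

lemma continuous_on_fourier_wave [continuous_intros]: "continuous_on A (fourier_wave lam)"
  unfolding fourier_wave_def by (intro continuous_intros)

lemma fourier_wave_measurable [measurable]: "fourier_wave lam \<in> borel_measurable borel"
  by (intro borel_measurable_continuous_onI continuous_on_fourier_wave)

lemma fourier_wave_half_period:
  assumes "\<bar>lam * h\<bar> = 1/2"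
  shows "fourier_wave lam (s + h) = - fourier_wave lam s"
proof -
  have "lam * h = 1/2 \<or> lam * h = - 1/2"
    using assms by linarith
  then have "2 * pi * (lam * h) = pi \<or> 2 * pi * (lam * h) = - pi"
    by auto
  then have "cis (- (2 * pi * (lam * h))) = -1"
    by (elim disjE) (simp_all (no_asm_simp) add: complex_eq_iff)
  moreover have "- (2 * pi * lam * (s + h)) = - (2 * pi * lam * s) + - (2 * pi * (lam * h))"
    by (simp add: algebra_simps)
  ultimately show ?thesis
    unfolding fourier_wave_eq_cis by (simp only: cis_mult[symmetric]) simp
qed

lemma integral_shift_half_period:
  fixes w :: "real \<Rightarrow> real"
  assumes "\<bar>lam * h\<bar> = 1/2"
  shows "(\<integral>x. w (x + h) *\<^sub>R fourier_wave lam x \<partial>lborel) = - (\<integral>x. w x *\<^sub>R fourier_wave lam x \<partial>lborel)"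
proof -
  have "(\<integral>x. w x *\<^sub>R fourier_wave lam x \<partial>lborel)
      = (\<integral>x. w (h + 1 * x) *\<^sub>R fourier_wave lam (h + 1 * x) \<partial>lborel)"
    using lborel_integral_real_affine[of 1 "\<lambda>x. w x *\<^sub>R fourier_wave lam x" h] by simp
  also have "\<dots> = (\<integral>x. - (w (x + h) *\<^sub>R fourier_wave lam x) \<partial>lborel)"
    using fourier_wave_half_period[OF assms] by (simp add: add.commute)
  finally show ?thesis by simp
qed

lemma fourier_integral_second_difference:
  fixes w :: "real \<Rightarrow> real"
  assumes w: "integrable lborel w" and h: "lam * h = 1/2"
  shows "4 *\<^sub>R (\<integral>x. w x *\<^sub>R fourier_wave lam x \<partial>lborel)
    = (\<integral>x. (2 * w x - w (x - h) - w (x + h)) *\<^sub>R fourier_wave lam x \<partial>lborel)"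
proof -
  define G where "G = (\<integral>x. w x *\<^sub>R fourier_wave lam x \<partial>lborel)"
  have [measurable]: "w \<in> borel_measurable borel"
    using w by auto
  have shifted: "integrable lborel (\<lambda>x. w (x + t) *\<^sub>R fourier_wave lam x)" for t
  proof (rule Bochner_Integration.integrable_bound)
    show "integrable lborel (\<lambda>x. w (x + t))"
      using lborel_integrable_real_affine[OF w, of 1 t] by (simp add: add.commute)
  qed simp_all
  have "(\<integral>x. (2 * w x - w (x - h) - w (x + h)) *\<^sub>R fourier_wave lam x \<partial>lborel)
    = (\<integral>x. 2 *\<^sub>R (w (x + 0) *\<^sub>R fourier_wave lam x) - w (x + - h) *\<^sub>R fourier_wave lam x
          - w (x + h) *\<^sub>R fourier_wave lam x \<partial>lborel)"
    by (rule Bochner_Integration.integral_cong) (simp_all add: scaleR_diff_left)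
  also have "\<dots> = 2 *\<^sub>R G - (\<integral>x. w (x + - h) *\<^sub>R fourier_wave lam x \<partial>lborel)
      - (\<integral>x. w (x + h) *\<^sub>R fourier_wave lam x \<partial>lborel)"
    using shifted[of 0] shifted[of h] shifted[of "-h"] unfolding G_def
    by (simp only: Bochner_Integration.integral_diff Bochner_Integration.integrable_diff
        integrable_scaleR_right integral_scaleR_right) simp
  also have "\<dots> = 2 *\<^sub>R G - - G - - G"
    using h unfolding G_def
    by (simp only: integral_shift_half_period[of lam h] integral_shift_half_period[of lam "-h"])
  also have "\<dots> = 4 *\<^sub>R G"
    by (simp add: scaleR_conv_of_real)
  finally show ?thesis unfolding G_def ..
qed

lemma integral_abs_le_of_integral_eq_0:
  fixes D B :: "'a \<Rightarrow> real"
  assumes D: "integrable M D" "(\<integral>x. D x \<partial>M) = 0" and B: "integrable M B"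
    and "\<And>x. 0 \<le> B x" "\<And>x. - D x \<le> B x"
  shows "(\<integral>x. \<bar>D x\<bar> \<partial>M) \<le> 2 * (\<integral>x. B x \<partial>M)"
proof -
  have "(\<integral>x. \<bar>D x\<bar> \<partial>M) \<le> (\<integral>x. D x + 2 * B x \<partial>M)"
  proof (rule integral_mono)
    show "integrable M (\<lambda>x. \<bar>D x\<bar>)"
      using D(1) by (rule integrable_abs)
    show "integrable M (\<lambda>x. D x + 2 * B x)"
      using D(1) B by (intro Bochner_Integration.integrable_add integrable_mult_right)
    fix x
    show "\<bar>D x\<bar> \<le> D x + 2 * B x"
      using assms(4,5)[of x] by (simp add: abs_le_iff)
  qed
  also have "\<dots> = 2 * (\<integral>x. B x \<partial>M)"
    using D B by (simp add: Bochner_Integration.integral_add)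
  finally show ?thesis .
qed

lemma second_difference_le_boundary_layers:
  fixes w :: "real \<Rightarrow> real"
  assumes nonneg: "\<And>s. 0 \<le> w s"
    and outside: "\<And>s. s < a \<or> b < s \<Longrightarrow> w s = 0"
    and near_a: "\<And>s. a \<le> s \<Longrightarrow> w s \<le> K * sqrt (s - a)"
    and near_b: "\<And>s. s \<le> b \<Longrightarrow> w s \<le> K * sqrt (b - s)"
    and midpoint_concave: "\<And>s h. 0 \<le> h \<Longrightarrow> a \<le> s - h \<Longrightarrow> s + h \<le> b \<Longrightarrow>
      w (s - h) + w (s + h) \<le> 2 * w s"
    and "0 \<le> K" "0 \<le> h"
  shows "w (x - h) + w (x + h) - 2 * w x
    \<le> K * sqrt (2 * h) * indicator {a - h..a + h} x + K * sqrt (2 * h) * indicator {b - h..b + h} x"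
proof -
  let ?c = "K * sqrt (2 * h)"
  have layer: "0 \<le> ?c * indicator {a - h..a + h} x" "0 \<le> ?c * indicator {b - h..b + h} x"
    using assms by simp_all
  consider "a \<le> x - h \<and> x + h \<le> b" | "x - h < a" | "b < x + h" by linarith
  then show ?thesis
  proof cases
    case 1
    then have "w (x - h) + w (x + h) - 2 * w x \<le> 0" using midpoint_concave[of h x] \<open>0 \<le> h\<close> by simp
    then show ?thesis using add_nonneg_nonneg[OF layer] by (rule order_trans)
  next
    case 2
    have "w (x - h) + w (x + h) - 2 * w x \<le> w (x + h)"
      using outside[of "x - h"] 2 nonneg[of x] by simp
    also have "w (x + h) \<le> ?c * indicator {a - h..a + h} x"
    proof (cases "a \<le> x + h")
      case True
      have "w (x + h) \<le> K * sqrt (x + h - a)" using near_a True by simp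
      also have "\<dots> \<le> ?c" using 2 \<open>0 \<le> K\<close> by (intro mult_left_mono) auto
      finally show ?thesis using True 2 by (simp add: indicator_def)
    next
      case False
      then show ?thesis using outside[of "x + h"] layer(1) by simp
    qed
    also have "\<dots> \<le> ?c * indicator {a - h..a + h} x + ?c * indicator {b - h..b + h} x"
      using layer(2) by simp
    finally show ?thesis .
  next
    case 3
    have "w (x - h) + w (x + h) - 2 * w x \<le> w (x - h)"
      using outside[of "x + h"] 3 nonneg[of x] by simp
    also have "w (x - h) \<le> ?c * indicator {b - h..b + h} x"
    proof (cases "x - h \<le> b")
      case True
      have "w (x - h) \<le> K * sqrt (b - (x - h))" using near_b True by simp
      also have "\<dots> \<le> ?c" using 3 \<open>0 \<le> K\<close> by (intro mult_left_mono) auto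
      finally show ?thesis using True 3 by (simp add: indicator_def)
    next
      case False
      then show ?thesis using outside[of "x - h"] layer(2) by simp
    qed
    also have "\<dots> \<le> ?c * indicator {a - h..a + h} x + ?c * indicator {b - h..b + h} x"
      using layer(1) by simp
    finally show ?thesis .
  qed
qed

lemma sqrt_inverse_div_eq_powr: "0 < x \<Longrightarrow> sqrt (1 / x) / x = x powr (-3/2)"
proof -
  assume x: "0 < x"
  have "sqrt (1 / x) / x = x powr (-1/2) / x powr 1"
    using x by (simp add: powr_half_sqrt[symmetric] powr_divide powr_minus_divide)
  also have "\<dots> = x powr (-1/2 - 1)"
    by (rule powr_diff[symmetric])
  finally show ?thesis by simp
qed

lemma norm_fourier_integral_concave_profile_le:
  fixes w :: "real \<Rightarrow> real"
  assumes w: "integrable lborel w"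
    and nonneg: "\<And>s. 0 \<le> w s"
    and outside: "\<And>s. s < a \<or> b < s \<Longrightarrow> w s = 0"
    and near_a: "\<And>s. a \<le> s \<Longrightarrow> w s \<le> K * sqrt (s - a)"
    and near_b: "\<And>s. s \<le> b \<Longrightarrow> w s \<le> K * sqrt (b - s)"
    and midpoint_concave: "\<And>s h. 0 \<le> h \<Longrightarrow> a \<le> s - h \<Longrightarrow> s + h \<le> b \<Longrightarrow>
      w (s - h) + w (s + h) \<le> 2 * w s"
    and K: "0 \<le> K" and lam: "0 < lam"
  shows "norm (\<integral>s. w s *\<^sub>R fourier_wave lam s \<partial>lborel) \<le> K * lam powr (-3/2)"
proof -
  define h where "h = 1 / (2 * lam)"
  have h: "0 < h" "lam * h = 1/2"
    using lam by (auto simp: h_def)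
  define c where "c = K * sqrt (2 * h)"
  define D where "D x = 2 * w x - w (x - h) - w (x + h)" for x
  define B where "B x = c * indicator {a - h..a + h} x + c * indicator {b - h..b + h} x" for x
  have shift_integrable: "integrable lborel (\<lambda>x. w (x + t))" for t
    using lborel_integrable_real_affine[OF w, of 1 t] by (simp add: add.commute)
  have shift_integral: "(\<integral>x. w (x + t) \<partial>lborel) = (\<integral>x. w x \<partial>lborel)" for t
    using lborel_integral_real_affine[of 1 w t] by (simp add: add.commute)
  have D_integrable: "integrable lborel D"
    unfolding D_def[abs_def] using w shift_integrable[of h] shift_integrable[of "-h"] by simp
  have D_integral: "(\<integral>x. D x \<partial>lborel) = 0"
    unfolding D_def using w shift_integrable[of h] shift_integrable[of "-h"] shift_integral[of h] shift_integral[of "-h"]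
    by simp
  have layer_integrable: "integrable lborel (indicator {r - h..r + h} :: real \<Rightarrow> real)" for r
    by (simp add: integrable_indicator_iff emeasure_lborel_Icc_eq)
  have B_integrable: "integrable lborel B"
    unfolding B_def[abs_def] using layer_integrable by simp
  have B_integral: "(\<integral>x. B x \<partial>lborel) = 4 * c * h"
    unfolding B_def using layer_integrable h by simp
  have B_nonneg: "0 \<le> B x" for x
    using K h(1) by (simp add: B_def c_def)
  have D_neg_le: "- D x \<le> B x" for x
    using second_difference_le_boundary_layers[OF nonneg outside near_a near_b midpoint_concave K, of h x] h
    by (simp add: D_def B_def c_def)
  have "(\<integral>x. \<bar>D x\<bar> \<partial>lborel) \<le> 2 * (4 * c * h)"
    using integral_abs_le_of_integral_eq_0[OF D_integrable D_integral B_integrable B_nonneg D_neg_le]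
    unfolding B_integral .
  moreover have "norm (4 *\<^sub>R (\<integral>s. w s *\<^sub>R fourier_wave lam s \<partial>lborel)) \<le> (\<integral>x. \<bar>D x\<bar> \<partial>lborel)"
    unfolding fourier_integral_second_difference[OF w h(2)] D_def[symmetric]
    using integral_norm_bound[of lborel "\<lambda>x. D x *\<^sub>R fourier_wave lam x"] by simp
  moreover have "2 * c * h = K * (sqrt (1 / lam) / lam)"
    using lam by (simp add: c_def h_def)
  ultimately have "norm (\<integral>s. w s *\<^sub>R fourier_wave lam s \<partial>lborel) \<le> K * (sqrt (1 / lam) / lam)"
    by simp
  then show ?thesis
    unfolding sqrt_inverse_div_eq_powr[OF lam] .
qed

lemma distr_lborel_orthogonal_transformation:
  fixes f :: "real^'n::{finite,wellorder} \<Rightarrow> real^'n::_"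
  assumes f: "orthogonal_transformation f"
  shows "distr lborel borel f = lborel"
proof (rule lborel_eqI[symmetric])
  have f_meas: "f \<in> borel_measurable borel"
    using f by (intro borel_measurable_continuous_onI linear_continuous_on orthogonal_transformation_linear
        linear_conv_bounded_linear[THEN iffD1])
  fix l r :: "real^'n::_" assume lr: "\<And>b. b \<in> Basis \<Longrightarrow> l \<bullet> b \<le> r \<bullet> b"
  have borel_preimage: "f -` box l r \<in> sets borel"
    using f_meas by (rule measurable_sets_borel) simp
  have "emeasure (distr lborel borel f) (box l r) = emeasure lebesgue (f -` box l r)"
    using f_meas borel_preimage by (subst emeasure_distr) (simp_all cong: measurable_cong_sets)
  also have "f -` box l r = inv f ` box l r"
    using orthogonal_transformation_bij[OF f] by (rule bij_vimage_eq_inv_image)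
  also have "emeasure lebesgue (inv f ` box l r) = emeasure lebesgue (box l r)"
    using measurable_orthogonal_image[OF orthogonal_transformation_inv[OF f], of "box l r"]
      measure_orthogonal_image[OF orthogonal_transformation_inv[OF f], of "box l r"]
    by (simp add: emeasure_eq_measure2)
  also have "\<dots> = (\<Prod>b\<in>Basis. (r - l) \<bullet> b)"
    using lr by (simp add: emeasure_lborel_box_eq)
  finally show "emeasure (distr lborel borel f) (box l r) = (\<Prod>b\<in>Basis. (r - l) \<bullet> b)" .
qed simp

lemma inner_real2: "(x::real^2) \<bullet> y = x$1 * y$1 + x$2 * y$2"
  by (simp add: inner_vec_def sum_2)

lemma prod_Basis_real2: "(\<Prod>b\<in>(Basis :: (real^2) set). x \<bullet> b) = x$1 * x$2"
  by (simp add: Basis_vec_def cart_eq_inner_axis axis_eq_axis prod.UNION_disjoint UNIV_2)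

lemma distr_lborel_pair_real2:
  "distr (lborel :: (real \<times> real) measure) borel (\<lambda>p. fst p *\<^sub>R axis 1 1 + snd p *\<^sub>R axis 2 1 :: real^2) = lborel"
proof (rule lborel_eqI[symmetric])
  have "(\<lambda>p. fst p *\<^sub>R axis 1 1 + snd p *\<^sub>R axis 2 1 :: real^2) \<in> borel_measurable borel"
    by (intro borel_measurable_continuous_onI continuous_intros)
  then have meas: "(\<lambda>p. fst p *\<^sub>R axis 1 1 + snd p *\<^sub>R axis 2 1 :: real^2)
      \<in> borel_measurable (lborel :: (real \<times> real) measure)"
    by (simp cong: measurable_cong_sets)
  fix l r :: "real^2" assume "\<And>b. b \<in> Basis \<Longrightarrow> l \<bullet> b \<le> r \<bullet> b"
  then have lr: "l$1 \<le> r$1" "l$2 \<le> r$2"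
    by (auto simp: Basis_vec_def cart_eq_inner_axis)
  have preimage: "(\<lambda>p. fst p *\<^sub>R axis 1 1 + snd p *\<^sub>R axis 2 1 :: real^2) -` box l r = {l$1<..<r$1} \<times> {l$2<..<r$2}"
    by (auto simp: mem_box_cart forall_2 axis_def)
  have "emeasure (distr lborel borel (\<lambda>p. fst p *\<^sub>R axis 1 1 + snd p *\<^sub>R axis 2 1 :: real^2)) (box l r)
      = emeasure (lborel \<Otimes>\<^sub>M lborel) ({l$1<..<r$1} \<times> {l$2<..<r$2})"
    using meas by (subst emeasure_distr) (simp_all add: preimage lborel_prod)
  also have "\<dots> = ennreal ((r - l)$1 * (r - l)$2)"
    using lr by (simp add: lborel.emeasure_pair_measure_Times ennreal_mult)
  finally show "emeasure (distr lborel borel (\<lambda>p. fst p *\<^sub>R axis 1 1 + snd p *\<^sub>R axis 2 1 :: real^2)) (box l r)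
      = (\<Prod>b\<in>Basis. (r - l) \<bullet> b)"
    by (simp add: prod_Basis_real2)
qed simp

definition perp :: "real^2 \<Rightarrow> real^2" where
  "perp u = vector [- (u$2), u$1]"

lemma perp_nth [simp]: "perp u $ 1 = - (u$2)" "perp u $ 2 = u$1"
  by (simp_all add: perp_def)

lemma perp_uminus [simp]: "perp (- u) = - perp u"
  by (simp add: vec_eq_iff forall_2)

lemma inner_perp_self [simp]: "u \<bullet> perp u = 0"
  by (simp add: inner_real2)

lemma norm_perp [simp]: "norm (perp u) = norm u"
  by (simp add: norm_eq_sqrt_inner inner_real2 algebra_simps)

lemma unit_real2: "norm (u::real^2) = 1 \<Longrightarrow> (u$1)\<^sup>2 + (u$2)\<^sup>2 = 1"
  by (metis inner_real2 norm_eq_1 power2_eq_square)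

lemma inner_unit_perp_sq:
  assumes "norm u = 1" shows "(z \<bullet> u)\<^sup>2 + (z \<bullet> perp u)\<^sup>2 = z \<bullet> z"
proof -
  have "(z \<bullet> u)\<^sup>2 + (z \<bullet> perp u)\<^sup>2 = (z \<bullet> z) * ((u$1)\<^sup>2 + (u$2)\<^sup>2)"
    by (simp add: inner_real2 algebra_simps power2_eq_square)
  then show ?thesis using unit_real2[OF assms] by simp
qed

lemma orthogonal_transformation_frame:
  assumes "norm u = 1"
  shows "orthogonal_transformation (\<lambda>y::real^2. y$1 *\<^sub>R u + y$2 *\<^sub>R perp u)"
  unfolding orthogonal_transformation
proof (intro conjI allI)
  show "linear (\<lambda>y::real^2. y$1 *\<^sub>R u + y$2 *\<^sub>R perp u)"
    by (rule linearI) (simp_all add: algebra_simps)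
  fix y :: "real^2"
  have "(y$1 *\<^sub>R u + y$2 *\<^sub>R perp u) \<bullet> (y$1 *\<^sub>R u + y$2 *\<^sub>R perp u)
      = (y \<bullet> y) * ((u$1)\<^sup>2 + (u$2)\<^sup>2)"
    by (simp add: inner_real2 algebra_simps power2_eq_square)
  then show "norm (y$1 *\<^sub>R u + y$2 *\<^sub>R perp u) = norm y"
    using unit_real2[OF assms] by (simp add: norm_eq_sqrt_inner)
qed

definition frame_point :: "real^2 \<Rightarrow> real \<times> real \<Rightarrow> real^2" where
  "frame_point u p = fst p *\<^sub>R u + snd p *\<^sub>R perp u"

lemma continuous_on_frame_point [continuous_intros]: "continuous_on A (frame_point u)"
  unfolding frame_point_def by (intro continuous_intros)

lemma frame_point_measurable [measurable]: "frame_point u \<in> borel_measurable borel"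
  by (intro borel_measurable_continuous_onI continuous_on_frame_point)

lemma inner_frame_point:
  assumes "norm u = 1"
  shows "frame_point u (s, t) \<bullet> u = s" "frame_point u (s, t) \<bullet> perp u = t"
proof -
  have "frame_point u (s, t) \<bullet> u = s * ((u$1)\<^sup>2 + (u$2)\<^sup>2)"
    "frame_point u (s, t) \<bullet> perp u = t * ((u$1)\<^sup>2 + (u$2)\<^sup>2)"
    by (simp_all add: frame_point_def inner_real2 algebra_simps power2_eq_square)
  then show "frame_point u (s, t) \<bullet> u = s" "frame_point u (s, t) \<bullet> perp u = t"
    using unit_real2[OF assms] by simp_all
qed

lemma frame_point_inner:
  assumes "norm u = 1"
  shows "frame_point u (y \<bullet> u, y \<bullet> perp u) = y"
proof -
  have "frame_point u (y \<bullet> u, y \<bullet> perp u) $ 1 = y $ 1 * ((u$1)\<^sup>2 + (u$2)\<^sup>2)"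
    "frame_point u (y \<bullet> u, y \<bullet> perp u) $ 2 = y $ 2 * ((u$1)\<^sup>2 + (u$2)\<^sup>2)"
    by (simp_all add: frame_point_def inner_real2 algebra_simps power2_eq_square)
  then show ?thesis
    using unit_real2[OF assms] by (simp add: vec_eq_iff forall_2)
qed

lemma frame_point_uminus: "frame_point (- u) (- s, - t) = frame_point u (s, t)"
  by (simp add: frame_point_def)

lemma distr_lborel_frame_point:
  assumes "norm u = 1"
  shows "distr lborel borel (frame_point u) = lborel"
proof -
  let ?vec = "\<lambda>p. fst p *\<^sub>R axis 1 1 + snd p *\<^sub>R axis 2 1 :: real^2"
  let ?rot = "\<lambda>y::real^2. y$1 *\<^sub>R u + y$2 *\<^sub>R perp u"
  have "?vec \<in> borel \<rightarrow>\<^sub>M borel"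
    by (intro borel_measurable_continuous_onI continuous_intros)
  then have vec_meas: "?vec \<in> lborel \<rightarrow>\<^sub>M borel"
    by (simp cong: measurable_cong_sets)
  have rot_meas: "?rot \<in> borel \<rightarrow>\<^sub>M borel"
    by (intro borel_measurable_continuous_onI continuous_intros)
  have "frame_point u = ?rot \<circ> ?vec"
    by (simp add: fun_eq_iff frame_point_def axis_def)
  with vec_meas rot_meas have "distr lborel borel (frame_point u) = distr (distr lborel borel ?vec) borel ?rot"
    by (simp add: distr_distr)
  also have "\<dots> = lborel"
    by (simp add: distr_lborel_pair_real2 distr_lborel_orthogonal_transformation
        orthogonal_transformation_frame[OF assms])
  finally show ?thesis .
qed

lemma integral_lborel_frame_point:
  fixes g :: "real^2 \<Rightarrow> 'b::{banach, second_countable_topology}"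
  assumes u: "norm u = 1" and g: "integrable lborel g"
  shows "integrable lborel (\<lambda>s. \<integral>t. g (frame_point u (s, t)) \<partial>lborel)"
    and "(\<integral>y. g y \<partial>lborel) = (\<integral>s. (\<integral>t. g (frame_point u (s, t)) \<partial>lborel) \<partial>lborel)"
proof -
  have [measurable]: "g \<in> borel_measurable borel"
    using g by auto
  have frame_meas: "frame_point u \<in> (lborel :: (real \<times> real) measure) \<rightarrow>\<^sub>M borel"
    by (simp cong: measurable_cong_sets)
  have "integrable (distr lborel borel (frame_point u)) g"
    using g by (simp add: distr_lborel_frame_point[OF u])
  then have "integrable (lborel \<Otimes>\<^sub>M lborel) (\<lambda>p. g (frame_point u p))"
    by (simp add: integrable_distr_eq[OF frame_meas] lborel_prod)
  from lborel_pair.integrable_fst'[OF this] lborel_pair.integral_fst'[OF this]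
  have "integrable lborel (\<lambda>s. \<integral>t. g (frame_point u (s, t)) \<partial>lborel)"
    and fubini: "(\<integral>s. (\<integral>t. g (frame_point u (s, t)) \<partial>lborel) \<partial>lborel)
      = (\<integral>p. g (frame_point u p) \<partial>(lborel \<Otimes>\<^sub>M lborel))"
    by simp_all
  then show "integrable lborel (\<lambda>s. \<integral>t. g (frame_point u (s, t)) \<partial>lborel)" by simp
  have "(\<integral>y. g y \<partial>lborel) = (\<integral>y. g y \<partial>distr lborel borel (frame_point u))"
    by (simp add: distr_lborel_frame_point[OF u])
  also have "\<dots> = (\<integral>p. g (frame_point u p) \<partial>(lborel \<Otimes>\<^sub>M lborel))"
    by (simp add: integral_distr[OF frame_meas] lborel_prod)
  finally show "(\<integral>y. g y \<partial>lborel) = (\<integral>s. (\<integral>t. g (frame_point u (s, t)) \<partial>lborel) \<partial>lborel)"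
    using fubini by simp
qed

definition slice :: "real^2 \<Rightarrow> (real^2) set \<Rightarrow> real \<Rightarrow> real set" where
  "slice u K s = {t. frame_point u (s, t) \<in> K}"

definition width :: "real^2 \<Rightarrow> (real^2) set \<Rightarrow> real \<Rightarrow> real" where
  "width u K s = measure lborel (slice u K s)"

lemma compact_slice:
  assumes u: "norm u = 1" and K: "compact K"
  shows "compact (slice u K s)"
proof -
  obtain B where B: "\<And>y. y \<in> K \<Longrightarrow> norm y \<le> B"
    using compact_imp_bounded[OF K] unfolding bounded_iff by blast
  have "\<bar>t\<bar> \<le> B" if "t \<in> slice u K s" for t
  proof -
    have "\<bar>t\<bar> = \<bar>frame_point u (s, t) \<bullet> perp u\<bar>"
      using inner_frame_point[OF u] by simp
    also have "\<dots> \<le> norm (frame_point u (s, t)) * norm (perp u)"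
      by (rule Cauchy_Schwarz_ineq2)
    finally show ?thesis
      using B[of "frame_point u (s, t)"] that u by (simp add: slice_def)
  qed
  then have "bounded (slice u K s)"
    unfolding bounded_iff by auto
  moreover have "closed ((\<lambda>t. frame_point u (s, t)) -` K)"
    using K by (intro continuous_closed_vimage) (auto simp: frame_point_def compact_imp_closed intro!: continuous_intros)
  ultimately show ?thesis
    by (simp add: compact_eq_bounded_closed slice_def vimage_def)
qed

lemma convex_slice:
  assumes "convex K"
  shows "convex (slice u K s)"
proof (rule convexI)
  fix x y a b :: real
  assume xy: "x \<in> slice u K s" "y \<in> slice u K s" and ab: "0 \<le> a" "0 \<le> b" "a + b = 1"
  have "a *\<^sub>R (s *\<^sub>R u) + b *\<^sub>R (s *\<^sub>R u) = s *\<^sub>R u"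
    using ab(3) by (metis scaleR_add_left scaleR_one)
  then have "frame_point u (s, a * x + b * y) = a *\<^sub>R frame_point u (s, x) + b *\<^sub>R frame_point u (s, y)"
    by (simp add: frame_point_def algebra_simps)
  also have "\<dots> \<in> K"
    using xy ab by (intro convexD[OF assms]) (auto simp: slice_def)
  finally show "a *\<^sub>R x + b *\<^sub>R y \<in> slice u K s"
    by (simp add: slice_def)
qed

lemma width_uminus:
  assumes "norm u = 1" "compact K"
  shows "width (- u) K (- s) = width u K s"
proof -
  have "frame_point (- u) (- s, t) = frame_point u (s, - t)" for t
    using frame_point_uminus[of u s "- t"] by simp
  then have "slice (- u) K (- s) = uminus -` slice u K s"
    by (simp add: slice_def vimage_def)
  moreover have "slice u K s \<in> sets borel"
    using compact_slice[OF assms] by (simp add: borel_compact)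
  ultimately show ?thesis
    unfolding width_def using measure_distr[of uminus lborel borel "slice u K s"]
    by (simp add: lborel_distr_uminus)
qed

lemma compact_real_obtain_interval:
  fixes S :: "real set"
  assumes "compact S" "S \<noteq> {}"
  obtains p q where "p \<in> S" "q \<in> S" "S \<subseteq> {p..q}"
proof -
  obtain p where p: "p \<in> S" "\<forall>y\<in>S. p \<le> y"
    using compact_attains_inf[OF assms] by blast
  obtain q where q: "q \<in> S" "\<forall>y\<in>S. y \<le> q"
    using compact_attains_sup[OF assms] by blast
  have "S \<subseteq> {p..q}"
    using p(2) q(2) by auto
  with p(1) q(1) show ?thesis
    by (rule that)
qed

lemma measure_add_le_twice_measure_midpoints:
  fixes S T M :: "real set"
  assumes S: "compact S" "S \<noteq> {}" and T: "compact T" "T \<noteq> {}"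
    and M: "convex M" "compact M"
    and mid: "\<And>x y. x \<in> S \<Longrightarrow> y \<in> T \<Longrightarrow> (x + y) / 2 \<in> M"
  shows "measure lborel S + measure lborel T \<le> 2 * measure lborel M"
proof -
  obtain p1 q1 where pq1: "p1 \<in> S" "q1 \<in> S" "S \<subseteq> {p1..q1}"
    using compact_real_obtain_interval[OF S] .
  obtain p2 q2 where pq2: "p2 \<in> T" "q2 \<in> T" "T \<subseteq> {p2..q2}"
    using compact_real_obtain_interval[OF T] .
  have le: "p1 \<le> q1" "p2 \<le> q2"
    using pq1 pq2 by auto
  have "measure lborel S \<le> measure lborel {p1..q1}"
    using pq1(3) S(1) by (intro measure_mono_fmeasurable fmeasurable_compact) (auto simp: borel_compact)
  then have S_le: "measure lborel S \<le> q1 - p1"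
    using le by simp
  have "measure lborel T \<le> measure lborel {p2..q2}"
    using pq2(3) T(1) by (intro measure_mono_fmeasurable fmeasurable_compact) (auto simp: borel_compact)
  then have T_le: "measure lborel T \<le> q2 - p2"
    using le by simp
  have "closed_segment ((p1 + p2) / 2) ((q1 + q2) / 2) \<subseteq> M"
    using M(1) mid[OF pq1(1) pq2(1)] mid[OF pq1(2) pq2(2)] by (simp add: convex_contains_segment)
  then have "measure lborel {(p1 + p2) / 2..(q1 + q2) / 2} \<le> measure lborel M"
    using M(2) le by (intro measure_mono_fmeasurable fmeasurable_compact) (auto simp: closed_segment_eq_real_ivl)
  then have M_ge: "(q1 + q2) / 2 - (p1 + p2) / 2 \<le> measure lborel M"
    using le by simp
  have "measure lborel S + measure lborel T \<le> (q1 - p1) + (q2 - p2)"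
    using S_le T_le by (rule add_mono)
  also have "\<dots> = 2 * ((q1 + q2) / 2 - (p1 + p2) / 2)"
    by (simp add: field_simps)
  also have "\<dots> \<le> 2 * measure lborel M"
    using M_ge by (rule mult_left_mono) simp
  finally show ?thesis .
qed

lemma width_midpoint_concave:
  assumes u: "norm u = 1" and K: "compact K" "convex K"
    and nonempty: "slice u K (s - h) \<noteq> {}" "slice u K (s + h) \<noteq> {}"
  shows "width u K (s - h) + width u K (s + h) \<le> 2 * width u K s"
  unfolding width_def
proof (rule measure_add_le_twice_measure_midpoints)
  fix x y assume "x \<in> slice u K (s - h)" "y \<in> slice u K (s + h)"
  then have "(1/2) *\<^sub>R frame_point u (s - h, x) + (1/2) *\<^sub>R frame_point u (s + h, y) \<in> K"
    by (intro convexD[OF K(2)]) (auto simp: slice_def)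
  moreover have "(1/2) *\<^sub>R frame_point u (s - h, x) + (1/2) *\<^sub>R frame_point u (s + h, y)
      = frame_point u (s, (x + y) / 2)"
    by (simp add: frame_point_def vec_eq_iff forall_2 field_simps)
  ultimately show "(x + y) / 2 \<in> slice u K s"
    by (simp add: slice_def)
qed (use nonempty compact_slice[OF u K(1)] convex_slice[OF K(2)] in auto)

lemma abs_inner_perp_le_sqrt:
  assumes u: "norm u = 1" and z: "norm z \<le> R" and d: "0 \<le> d" and depth: "R - d \<le> \<bar>z \<bullet> u\<bar>"
  shows "\<bar>z \<bullet> perp u\<bar> \<le> sqrt (2 * R * d)"
proof -
  have R: "0 \<le> R"
    using z norm_ge_zero order_trans by blast
  have zz: "z \<bullet> z \<le> R\<^sup>2"
    using z R by (simp add: power2_norm_eq_inner[symmetric] power_mono)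
  have perp_sq: "(z \<bullet> perp u)\<^sup>2 = z \<bullet> z - (z \<bullet> u)\<^sup>2"
    using inner_unit_perp_sq[OF u, of z] by simp
  have "(z \<bullet> perp u)\<^sup>2 \<le> 2 * R * d"
  proof (cases "d \<le> R")
    case True
    have "(R - d)\<^sup>2 \<le> (z \<bullet> u)\<^sup>2"
      using True depth power_mono[of "R - d" "\<bar>z \<bullet> u\<bar>" 2] by simp
    then have "(z \<bullet> perp u)\<^sup>2 \<le> R\<^sup>2 - (R - d)\<^sup>2"
      using perp_sq zz by linarith
    also have "\<dots> \<le> 2 * R * d"
      by (simp add: power2_eq_square algebra_simps)
    finally show ?thesis .
  next
    case False
    then have "R * R \<le> R * d"
      using R by (intro mult_left_mono) auto
    moreover have "0 \<le> R * d"
      using False R by simp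
    ultimately have "R\<^sup>2 \<le> 2 * R * d"
      by (simp add: power2_eq_square)
    moreover have "(z \<bullet> perp u)\<^sup>2 \<le> R\<^sup>2"
      using perp_sq zz zero_le_power2[of "z \<bullet> u"] by linarith
    ultimately show ?thesis
      by linarith
  qed
  then show ?thesis
    by (simp add: real_le_rsqrt)
qed

lemma touching_offset:
  fixes t e c u y :: "real^2"
  assumes "t + e = c + R *\<^sub>R u"
  shows "t + y - c = R *\<^sub>R u + (y - e)"
proof -
  have "t + y - c = (t + e) - c + (y - e)"
    by (simp add: algebra_simps)
  also have "\<dots> = R *\<^sub>R u + (y - e)"
    using assms by simp
  finally show ?thesis .
qed

lemma inner_le_of_touching:
  fixes t y c e u :: "real^2"
  assumes u: "norm u = 1" and in_ball: "norm (t + y - c) \<le> R" and e: "t + e = c + R *\<^sub>R u"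
  shows "y \<bullet> u \<le> e \<bullet> u"
proof -
  have "R + (y - e) \<bullet> u = (t + y - c) \<bullet> u"
    using u by (simp add: touching_offset[OF e] inner_add_left norm_eq_1)
  also have "\<dots> \<le> R"
    using Cauchy_Schwarz_ineq2[of "t + y - c" u] u in_ball by simp
  finally show ?thesis
    by (simp add: inner_diff_left)
qed

lemma width_le_of_touching:
  assumes u: "norm u = 1" and K: "compact K"
    and in_ball: "\<And>y. y \<in> K \<Longrightarrow> norm (t + y - c) \<le> R"
    and e: "e \<in> K" "t + e = c + R *\<^sub>R u"
    and s: "s \<le> e \<bullet> u"
  shows "width u K s \<le> 2 * sqrt (2 * R) * sqrt (e \<bullet> u - s)"
proof -
  have R: "0 \<le> R"
    using in_ball[OF e(1)] norm_ge_zero order_trans by blast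
  define r where "r = sqrt (2 * R * (e \<bullet> u - s))"
  have "slice u K s \<subseteq> {e \<bullet> perp u - r..e \<bullet> perp u + r}"
  proof
    fix \<tau> assume "\<tau> \<in> slice u K s"
    then have y: "frame_point u (s, \<tau>) \<in> K"
      by (simp add: slice_def)
    let ?z = "t + frame_point u (s, \<tau>) - c"
    have "?z \<bullet> u = R - (e \<bullet> u - s)" "?z \<bullet> perp u = \<tau> - e \<bullet> perp u"
      using u by (simp_all add: touching_offset[OF e(2)] inner_frame_point inner_diff_left inner_add_left
          inner_perp_self norm_eq_1)
    then have "\<bar>\<tau> - e \<bullet> perp u\<bar> \<le> r"
      using abs_inner_perp_le_sqrt[OF u in_ball[OF y], of "e \<bullet> u - s"] s by (simp add: r_def)
    then show "\<tau> \<in> {e \<bullet> perp u - r..e \<bullet> perp u + r}"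
      by auto
  qed
  then have "width u K s \<le> measure lborel {e \<bullet> perp u - r..e \<bullet> perp u + r}"
    unfolding width_def using compact_slice[OF u K]
    by (intro measure_mono_fmeasurable fmeasurable_compact) (auto simp: borel_compact)
  also have "\<dots> = 2 * sqrt (2 * R) * sqrt (e \<bullet> u - s)"
    using R s by (simp add: r_def real_sqrt_mult)
  finally show ?thesis .
qed

lemma slice_nonempty:
  assumes u: "norm u = 1" and K: "convex K" and e: "e \<in> K" "e' \<in> K"
    and r: "r \<in> closed_segment (e \<bullet> u) (e' \<bullet> u)"
  shows "slice u K r \<noteq> {}"
proof -
  have "linear (\<lambda>y::real^2. y \<bullet> u)"
    by (simp add: bounded_linear_inner_left bounded_linear.linear)
  then have "r \<in> (\<lambda>y. y \<bullet> u) ` closed_segment e e'"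
    using r closed_segment_linear_image[of "\<lambda>y. y \<bullet> u" e e'] by simp
  then obtain y where "y \<in> closed_segment e e'" "y \<bullet> u = r"
    by blast
  moreover have "closed_segment e e' \<subseteq> K"
    using K e by (simp add: convex_contains_segment)
  ultimately have "y \<bullet> perp u \<in> slice u K r"
    using frame_point_inner[OF u, of y] by (auto simp: slice_def)
  then show ?thesis
    by blast
qed

lemma integral_fourier_wave_eq_width:
  assumes u: "norm u = 1" and K: "compact K"
  shows "integrable lborel (\<lambda>s. width u K s *\<^sub>R fourier_wave lam s)"
    and "integral K (\<lambda>y. fourier_wave lam (u \<bullet> y)) = (\<integral>s. width u K s *\<^sub>R fourier_wave lam s \<partial>lborel)"
proof -
  define g where "g y = indicator K y *\<^sub>R fourier_wave lam (u \<bullet> y)" for y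
  have g: "integrable lborel g"
    unfolding g_def[abs_def] using K
    by (intro borel_integrable_compact) (auto intro!: continuous_intros simp: fourier_wave_def)
  have inner: "(\<integral>t. g (frame_point u (s, t)) \<partial>lborel) = width u K s *\<^sub>R fourier_wave lam s" for s
  proof -
    have "(\<integral>t. g (frame_point u (s, t)) \<partial>lborel) = (\<integral>t. indicator (slice u K s) t *\<^sub>R fourier_wave lam s \<partial>lborel)"
      using inner_frame_point(1)[OF u, of s] by (simp add: g_def slice_def indicator_def inner_commute)
    also have "\<dots> = width u K s *\<^sub>R fourier_wave lam s"
    proof -
      have "integrable lborel (indicator (slice u K s) :: real \<Rightarrow> real)"
        using compact_slice[OF u K, of s] emeasure_compact_finite[OF compact_slice[OF u K, of s]]
        by (simp add: integrable_indicator_iff borel_compact)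
      then show ?thesis
        by (simp add: width_def)
    qed
    finally show ?thesis .
  qed
  show "integrable lborel (\<lambda>s. width u K s *\<^sub>R fourier_wave lam s)"
    using integral_lborel_frame_point(1)[OF u g] by (simp add: inner)
  have "g = (\<lambda>y. if y \<in> K then fourier_wave lam (u \<bullet> y) else 0)"
    by (simp add: g_def fun_eq_iff indicator_def)
  then have "integral K (\<lambda>y. fourier_wave lam (u \<bullet> y)) = integral UNIV g"
    by (simp add: integral_restrict_UNIV)
  also have "\<dots> = (\<integral>y. g y \<partial>lborel)"
    using g by (rule integral_lborel)
  also have "\<dots> = (\<integral>s. width u K s *\<^sub>R fourier_wave lam s \<partial>lborel)"
    using integral_lborel_frame_point(2)[OF u g] by (simp add: inner)
  finally show "integral K (\<lambda>y. fourier_wave lam (u \<bullet> y)) = (\<integral>s. width u K s *\<^sub>R fourier_wave lam s \<partial>lborel)" .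
qed

text \<open>Membership in a closed set replaces the frontier condition of the rolling hypothesis
  (see \<open>rolls_unimpeded_touches_inside\<close>).\<close>

definition touches_inside :: "(real^2) set \<Rightarrow> real^2 \<Rightarrow> real \<Rightarrow> real^2 \<Rightarrow> bool" where
  "touches_inside K c R x \<longleftrightarrow> (\<exists>t. (\<lambda>y. t + y) ` K \<subseteq> cball c R \<and> x \<in> (\<lambda>y. t + y) ` K)"

lemma touches_insideE:
  assumes "touches_inside K c R x"
  obtains t e where "\<forall>y\<in>K. norm (t + y - c) \<le> R" "e \<in> K" "t + e = x"
proof -
  obtain t where t: "(\<lambda>y. t + y) ` K \<subseteq> cball c R" "x \<in> (\<lambda>y. t + y) ` K"
    using assms unfolding touches_inside_def by blast
  have "norm (t + y - c) \<le> R" if "y \<in> K" for y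
    using t(1) that by (auto simp: dist_norm norm_minus_commute)
  moreover obtain e where "e \<in> K" "t + e = x"
    using t(2) by blast
  ultimately show ?thesis
    using that by blast
qed

lemma rolls_unimpeded_touches_inside:
  assumes "rolls_unimpeded_in \<Omega> c R" "x \<in> sphere c R"
  shows "touches_inside (closure \<Omega>) c R x"
proof -
  obtain t where t: "(\<lambda>y. t + y) ` \<Omega> \<subseteq> cball c R" "x \<in> frontier ((\<lambda>y. t + y) ` \<Omega>)"
    using assms unfolding rolls_unimpeded_in_def by blast
  have closure_image: "closure ((\<lambda>y. t + y) ` \<Omega>) = (\<lambda>y. t + y) ` closure \<Omega>"
    by (rule closure_translation)
  have "closure ((\<lambda>y. t + y) ` \<Omega>) \<subseteq> cball c R"
    using t(1) by (rule closure_minimal) simp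
  then have "(\<lambda>y. t + y) ` closure \<Omega> \<subseteq> cball c R"
    by (simp only: closure_image)
  moreover have "x \<in> (\<lambda>y. t + y) ` closure \<Omega>"
    using t(2) closure_image unfolding frontier_def by blast
  ultimately show ?thesis
    unfolding touches_inside_def by blast
qed

lemma norm_integral_fourier_wave_le:
  assumes u: "norm u = 1" and K: "compact K" "convex K"
    and touch: "touches_inside K c R (c + R *\<^sub>R u)" "touches_inside K c R (c - R *\<^sub>R u)"
    and lam: "0 < lam"
  shows "norm (integral K (\<lambda>y. fourier_wave lam (u \<bullet> y))) \<le> 2 * sqrt (2 * R) * lam powr (-3/2)"
proof -
  have u': "norm (- u) = 1"
    using u by simp
  obtain t e where "\<forall>y\<in>K. norm (t + y - c) \<le> R" and e: "e \<in> K" "t + e = c + R *\<^sub>R u"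
    using touch(1) by (rule touches_insideE)
  then have ball: "\<And>y. y \<in> K \<Longrightarrow> norm (t + y - c) \<le> R"
    by blast
  have "touches_inside K c R (c + R *\<^sub>R (- u))"
    using touch(2) by simp
  then obtain t' e' where "\<forall>y\<in>K. norm (t' + y - c) \<le> R" and e': "e' \<in> K" "t' + e' = c + R *\<^sub>R (- u)"
    by (rule touches_insideE)
  then have ball': "\<And>y. y \<in> K \<Longrightarrow> norm (t' + y - c) \<le> R"
    by blast
  have R: "0 \<le> R"
    using ball[OF e(1)] norm_ge_zero order_trans by blast
  define a where "a = e' \<bullet> u"
  define b where "b = e \<bullet> u"
  have level: "a \<le> y \<bullet> u" "y \<bullet> u \<le> b" if "y \<in> K" for y
    using inner_le_of_touching[OF u ball[OF that] e(2)] inner_le_of_touching[OF u' ball'[OF that] e'(2)]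
    by (simp_all add: a_def b_def)
  have outside: "width u K s = 0" if "s < a \<or> b < s" for s
  proof -
    have "slice u K s = {}"
      using that level inner_frame_point(1)[OF u] by (force simp: slice_def)
    then show ?thesis
      by (simp add: width_def)
  qed
  have near_b: "width u K s \<le> 2 * sqrt (2 * R) * sqrt (b - s)" if "s \<le> b" for s
    using width_le_of_touching[OF u K(1) ball e] that by (simp add: b_def)
  have near_a: "width u K s \<le> 2 * sqrt (2 * R) * sqrt (s - a)" if "a \<le> s" for s
    using width_le_of_touching[OF u' K(1) ball' e', of "- s"] that width_uminus[OF u K(1), of s]
    by (simp add: a_def)
  have concave: "width u K (s - h) + width u K (s + h) \<le> 2 * width u K s"
    if "0 \<le> h" "a \<le> s - h" "s + h \<le> b" for s h
  proof (rule width_midpoint_concave[OF u K])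
    have "closed_segment (e' \<bullet> u) (e \<bullet> u) = {a..b}"
      using that by (simp add: a_def b_def closed_segment_eq_real_ivl)
    then show "slice u K (s - h) \<noteq> {}" "slice u K (s + h) \<noteq> {}"
      using that slice_nonempty[OF u K(2) e'(1) e(1), of "s - h"] slice_nonempty[OF u K(2) e'(1) e(1), of "s + h"]
      by simp_all
  qed
  have width_integrable: "integrable lborel (width u K)"
  proof -
    have "integrable lborel (\<lambda>s. norm (width u K s *\<^sub>R fourier_wave lam s))"
      using integral_fourier_wave_eq_width(1)[OF u K(1)] by (rule integrable_norm)
    then show ?thesis
      by (simp add: width_def[abs_def])
  qed
  show ?thesis
    unfolding integral_fourier_wave_eq_width(2)[OF u K(1)]
    by (rule norm_fourier_integral_concave_profile_le[OF width_integrable _ outside near_a near_b concave _ lam])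
      (simp_all add: width_def R)
qed

lemma integral_closure_convex:
  fixes f :: "'a::euclidean_space \<Rightarrow> 'b::banach"
  assumes "convex S"
  shows "integral (closure S) f = integral S f"
proof (rule integral_spike_set)
  have "{x \<in> S - closure S. f x \<noteq> 0} = {}"
    using closure_subset by blast
  then show "negligible {x \<in> S - closure S. f x \<noteq> 0}"
    by (simp only: negligible_empty)
  show "negligible {x \<in> closure S - S. f x \<noteq> 0}"
    using negligible_convex_frontier[OF assms]
    by (rule negligible_subset) (auto simp: frontier_def dest: subsetD[OF interior_subset])
qed

theorem theorem6:
  fixes \<Omega> :: "(real^2) set"
  assumes "bounded \<Omega>" and "convex \<Omega>" and "measure lebesgue \<Omega> > 0"
    and "\<exists>c R. rolls_unimpeded_in \<Omega> c R"
  shows "\<exists>C. \<forall>\<xi>::real^2. \<xi> \<noteq> 0 \<longrightarrow> norm (fourier_char \<Omega> \<xi>) \<le> C * norm \<xi> powr (-3/2)"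
proof -
  obtain c R where roll: "rolls_unimpeded_in \<Omega> c R"
    using assms(4) by blast
  have K: "compact (closure \<Omega>)" "convex (closure \<Omega>)"
    using assms(1,2) by (simp_all add: compact_closure convex_closure)
  have "norm (fourier_char \<Omega> \<xi>) \<le> 2 * sqrt (2 * R) * norm \<xi> powr (-3/2)" if "\<xi> \<noteq> 0" for \<xi>
  proof -
    define u where "u = \<xi> /\<^sub>R norm \<xi>"
    have u: "norm u = 1" and \<xi>: "\<xi> = norm \<xi> *\<^sub>R u"
      using that by (simp_all add: u_def)
    have "c + R *\<^sub>R u \<in> sphere c R" "c - R *\<^sub>R u \<in> sphere c R"
      using roll u by (simp_all add: rolls_unimpeded_in_def dist_norm)
    then have touch: "touches_inside (closure \<Omega>) c R (c + R *\<^sub>R u)"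
      "touches_inside (closure \<Omega>) c R (c - R *\<^sub>R u)"
      using roll by (simp_all add: rolls_unimpeded_touches_inside)
    have "fourier_char \<Omega> \<xi> = integral (closure \<Omega>) (\<lambda>y. fourier_wave (norm \<xi>) (u \<bullet> y))"
      unfolding fourier_char_def integral_closure_convex[OF assms(2)]
      by (subst \<xi>) (simp add: fourier_wave_def)
    then show ?thesis
      using norm_integral_fourier_wave_le[OF u K touch] that by simp
  qed
  then show ?thesis
    by blast
qed

end
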